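(* Assume the bound condition (B) holds with constants $A,D>0$ and that $\max\{\Delta x,\Delta y\}\le 2D/A$. Let $f$ be arbitrary (not necessarily zero) and let $\psi,\tilde\psi$ be two initial data. Let $v$ be a grid function satisfying the scheme (IFDS) with initial datum $\psi$ and $\tilde v$ a grid function satisfying the scheme (IFDS) with the same $a,b,c,d,f$ and initial datum $\tilde\psi$. Put $\varepsilon_{i,j}^k=v_{i,j}^k-\tilde v_{i,j}^k$ and $\|E^k\|_\infty=\max_{1\le i\le N_x-1,\,1\le j\le N_y-1}|\varepsilon_{i,j}^k|$. Then $$\|E^k\|_\infty\le\|E^0\|_\infty\qquad\text{for all }k=1,\dots,N_t.$$
   Context: Fix $0<\alpha<1$, $T>0$ and a rectangle $\Omega=(x_L,x_R)\times(y_L,y_R)$. Let $a,b,c,d,f$ be real functions on $\overline\Omega\times[0,T]$ and $\psi$ a real function on $\overline\Omega$. Grid: for positive integers $N_x,N_y,N_t$ put $\Delta x=(x_R-x_L)/N_x$, $\Delta y=(y_R-y_L)/N_y$, $\Delta t=T/N_t$, $x_i=x_L+i\Delta x$, $y_j=y_L+j\Delta y$, $t_k=k\Delta t$, and for a function $g$ write $g_{i,j}^k=g(x_i,y_j,t_k)$. Let $\sigma_{\alpha,\Delta t}=\frac{1}{(\Delta t)^\alpha\Gamma(2-\alpha)}$ and $\omega_s=(s+1)^{1-\alpha}-s^{1-\alpha}$ for $s\ge0$. Scheme (IFDS) with initial datum $\psi$: a grid function $(v_{i,j}^k)_{0\le i\le N_x,\,0\le j\le N_y,\,0\le k\le N_t}$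 with $v_{i,j}^0=\psi(x_i,y_j)$, $v_{i,j}^k=0$ whenever $i\in\{0,N_x\}$ or $j\in\{0,N_y\}$ (for $k\ge1$), and for all $1\le i\le N_x-1$, $1\le j\le N_y-1$, $0\le k\le N_t-1$: $$\sigma_{\alpha,\Delta t}\sum_{s=0}^{k}\omega_s\big(v_{i,j}^{k-s+1}-v_{i,j}^{k-s}\big)+a_{i,j}^{k+1}\frac{v_{i+1,j}^{k+1}-v_{i-1,j}^{k+1}}{2\Delta x}+b_{i,j}^{k+1}\frac{v_{i,j+1}^{k+1}-v_{i,j-1}^{k+1}}{2\Delta y}$$ $$=c_{i,j}^{k+1}\frac{v_{i+1,j}^{k+1}-2v_{i,j}^{k+1}+v_{i-1,j}^{k+1}}{(\Delta x)^2}+d_{i,j}^{k+1}\frac{v_{i,j+1}^{k+1}-2v_{i,j}^{k+1}+v_{i,j-1}^{k+1}}{(\Delta y)^2}+f_{i,j}^{k+1}.$$ Bound condition (B): there are constants $A>0$, $D>0$ such that for all $(x,y,t)\in\overline\Omega\times[0,T]$: $0\le a(x,y,t)\le A$, $0\le b(x,y,t)\le A$, $c(x,y,t)\ge D$, $d(x,y,t)\ge D$. *)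

theory Defs
  imports "HOL-Analysis.Analysis"
begin

definition sigma_coef :: "real \<Rightarrow> real \<Rightarrow> real" where
  "sigma_coef \<alpha> dt = 1 / (dt powr \<alpha> * Gamma (2 - \<alpha>))"

definition omega :: "real \<Rightarrow> nat \<Rightarrow> real" where
  "omega \<alpha> s = (real s + 1) powr (1 - \<alpha>) - (real s) powr (1 - \<alpha>)"

text \<open>The scheme (IFDS): v i j k stands for v_{i,j}^k. Coefficient functions take (x,y,t).\<close>
definition IFDS ::
  "real \<Rightarrow> real \<Rightarrow> real \<Rightarrow> real \<Rightarrow> real \<Rightarrow> real \<Rightarrow> nat \<Rightarrow> nat \<Rightarrow> nat \<Rightarrow>
   (real \<Rightarrow> real \<Rightarrow> real \<Rightarrow> real) \<Rightarrow> (real \<Rightarrow> real \<Rightarrow> real \<Rightarrow> real) \<Rightarrow>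
   (real \<Rightarrow> real \<Rightarrow> real \<Rightarrow> real) \<Rightarrow> (real \<Rightarrow> real \<Rightarrow> real \<Rightarrow> real) \<Rightarrow>
   (real \<Rightarrow> real \<Rightarrow> real \<Rightarrow> real) \<Rightarrow> (real \<Rightarrow> real \<Rightarrow> real) \<Rightarrow>
   (nat \<Rightarrow> nat \<Rightarrow> nat \<Rightarrow> real) \<Rightarrow> bool" where
  "IFDS \<alpha> T xL xR yL yR Nx Ny Nt a b c d f \<psi> v \<longleftrightarrow>
    (let dx = (xR - xL) / real Nx; dy = (yR - yL) / real Ny; dt = T / real Nt;
         X = (\<lambda>i. xL + real i * dx); Y = (\<lambda>j. yL + real j * dy); Tm = (\<lambda>k. real k * dt)
     in (\<forall>i\<le>Nx. \<forall>j\<le>Ny. v i j 0 = \<psi> (X i) (Y j))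
      \<and> (\<forall>i\<le>Nx. \<forall>j\<le>Ny. \<forall>k. 1 \<le> k \<and> k \<le> Nt \<and> (i = 0 \<or> i = Nx \<or> j = 0 \<or> j = Ny) \<longrightarrow> v i j k = 0)
      \<and> (\<forall>i j k. 1 \<le> i \<and> i \<le> Nx - 1 \<and> 1 \<le> j \<and> j \<le> Ny - 1 \<and> k \<le> Nt - 1 \<longrightarrow>
           sigma_coef \<alpha> dt * (\<Sum>s=0..k. omega \<alpha> s * (v i j (k - s + 1) - v i j (k - s)))
           + a (X i) (Y j) (Tm (k+1)) * (v (i+1) j (k+1) - v (i-1) j (k+1)) / (2 * dx)
           + b (X i) (Y j) (Tm (k+1)) * (v i (j+1) (k+1) - v i (j-1) (k+1)) / (2 * dy)
           = c (X i) (Y j) (Tm (k+1)) * (v (i+1) j (k+1) - 2 * v i j (k+1) + v (i-1) j (k+1)) / dx\<^sup>2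
           + d (X i) (Y j) (Tm (k+1)) * (v i (j+1) (k+1) - 2 * v i j (k+1) + v i (j-1) (k+1)) / dy\<^sup>2
           + f (X i) (Y j) (Tm (k+1))))"

definition err_norm :: "nat \<Rightarrow> nat \<Rightarrow> (nat \<Rightarrow> nat \<Rightarrow> nat \<Rightarrow> real) \<Rightarrow> nat \<Rightarrow> real" where
  "err_norm Nx Ny e k = Max {\<bar>e i j k\<bar> | i j. 1 \<le> i \<and> i \<le> Nx - 1 \<and> 1 \<le> j \<and> j \<le> Ny - 1}"

end

theory Submission
  imports Defs
begin

text \<open>
  The L1 weights \<open>\<omega> s\<close> are nonnegative, nonincreasing and \<open>\<omega> 0 = 1\<close>, so summation by parts
  writes the discrete Caputo derivative at level \<open>k+1\<close> as the value at level \<open>k+1\<close> minus a convex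
  combination of the values at the earlier levels. At an interior point where the error at level
  \<open>k+1\<close> has maximal modulus, the mesh condition \<open>a \<Delta>x \<le> 2c\<close>, \<open>b \<Delta>y \<le> 2d\<close> makes all neighbour
  weights of the centred scheme nonnegative, so the error there is a convex combination of that
  history and of neighbouring values, none of larger modulus. Hence the maximum at level \<open>k+1\<close>
  is bounded by the maximum over the earlier levels, and induction on \<open>k\<close> finishes the proof.
\<close>


definition L1_diff :: "real \<Rightarrow> (nat \<Rightarrow> real) \<Rightarrow> nat \<Rightarrow> real" where
  "L1_diff \<alpha> u k = (\<Sum>s=0..k. omega \<alpha> s * (u (k - s + 1) - u (k - s)))"

definition grid_interior :: "nat \<Rightarrow> nat \<Rightarrow> (nat \<times> nat) set" where
  "grid_interior Nx Ny = {1..Nx - 1} \<times> {1..Ny - 1}"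

definition at_grid ::
  "real \<Rightarrow> real \<Rightarrow> real \<Rightarrow> real \<Rightarrow> real \<Rightarrow> nat \<Rightarrow> nat \<Rightarrow> nat \<Rightarrow>
   (real \<Rightarrow> real \<Rightarrow> real \<Rightarrow> real) \<Rightarrow> nat \<Rightarrow> nat \<Rightarrow> nat \<Rightarrow> real" where
  "at_grid xL xR yL yR T Nx Ny Nt g i j k =
     g (xL + real i * ((xR - xL) / real Nx)) (yL + real j * ((yR - yL) / real Ny)) (real k * (T / real Nt))"

lemma L1_diff_diff: "L1_diff \<alpha> (\<lambda>k. u k - w k) k = L1_diff \<alpha> u k - L1_diff \<alpha> w k"
  unfolding L1_diff_def by (simp add: sum_subtractf[symmetric] algebra_simps)

lemma omega_0 [simp]: "omega \<alpha> 0 = 1"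
  unfolding omega_def by simp

lemma omega_nonneg: "\<alpha> < 1 \<Longrightarrow> 0 \<le> omega \<alpha> s"
  unfolding omega_def by (simp add: powr_mono2)

lemma omega_Suc_le:
  assumes "0 < \<alpha>" "\<alpha> < 1"
  shows "omega \<alpha> (Suc s) \<le> omega \<alpha> s"
proof (cases "s = 0")
  case True
  have "(2::real) powr (1 - \<alpha>) \<le> 2 powr 1"
    using assms by (intro powr_mono) auto
  then show ?thesis using True unfolding omega_def by simp
next
  case False
  define \<beta> where "\<beta> = 1 - \<alpha>"
  have \<beta>: "0 < \<beta>" "\<beta> < 1" using assms by (auto simp: \<beta>_def)
  define g where "g = (\<lambda>x::real. (x + 1) powr \<beta> - x powr \<beta>)"
  have "g (real s + 1) \<le> g (real s)"
  proof (rule DERIV_nonpos_imp_decreasing_open[of "real s" "real s + 1" g])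
    fix x assume x: "real s < x" "x < real s + 1"
    then have "0 < x" using False by linarith
    have d1: "((\<lambda>x. x powr \<beta>) has_real_derivative \<beta> * (x + 1) powr (\<beta> - 1)) (at (x + 1))"
      using \<open>0 < x\<close> by (intro has_real_derivative_powr) auto
    have d2: "((\<lambda>x. x powr \<beta>) has_real_derivative \<beta> * x powr (\<beta> - 1)) (at x)"
      using \<open>0 < x\<close> by (intro has_real_derivative_powr) auto
    have "(g has_real_derivative \<beta> * (x + 1) powr (\<beta> - 1) - \<beta> * x powr (\<beta> - 1)) (at x)"
      unfolding g_def using DERIV_diff[OF d1[unfolded DERIV_shift] d2] by (simp add: add.commute)
    moreover have "(x + 1) powr (\<beta> - 1) \<le> x powr (\<beta> - 1)"
      using \<open>0 < x\<close> \<beta> by (intro powr_mono2') auto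
    ultimately show "\<exists>y. (g has_real_derivative y) (at x) \<and> y \<le> 0"
      using \<beta> by (auto simp: mult_left_mono)
  next
    show "continuous_on {real s..real s + 1} g"
      unfolding g_def using False by (intro continuous_intros) auto
  qed simp
  then show ?thesis unfolding omega_def g_def \<beta>_def by (simp add: add.commute)
qed

lemma sum_weighted_differences_by_parts:
  fixes g u :: "nat \<Rightarrow> real"
  shows "(\<Sum>s=0..k. g s * (u (k - s + 1) - u (k - s)))
       = g 0 * u (k + 1) - g k * u 0 - (\<Sum>s<k. (g s - g (s + 1)) * u (k - s))"
proof (induction k arbitrary: g)
  case 0
  then show ?case by (simp add: algebra_simps)
next
  case (Suc k)
  have "(\<Sum>s=0..Suc k. g s * (u (Suc k - s + 1) - u (Suc k - s)))
      = g 0 * (u (k + 2) - u (k + 1)) + (\<Sum>s=0..k. g (Suc s) * (u (k - s + 1) - u (k - s)))"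
    by (subst sum.atLeast0_atMost_Suc_shift) (simp add: Suc_diff_le)
  also have "\<dots> = g 0 * (u (k + 2) - u (k + 1)) + (g 1 * u (k + 1) - g (Suc k) * u 0
      - (\<Sum>s<k. (g (Suc s) - g (Suc s + 1)) * u (k - s)))"
    using Suc[of "\<lambda>s. g (Suc s)"] by simp
  moreover have "(\<Sum>s<Suc k. (g s - g (s + 1)) * u (Suc k - s))
      = (g 0 - g 1) * u (k + 1) + (\<Sum>s<k. (g (Suc s) - g (Suc s + 1)) * u (k - s))"
    by (subst sum.lessThan_Suc_shift) simp
  ultimately show ?case by (simp add: algebra_simps)
qed

lemma sum_weighted_differences_history_bound:
  fixes g u :: "nat \<Rightarrow> real"
  assumes g_nonneg: "\<And>s. 0 \<le> g s" and g_decr: "\<And>s. g (Suc s) \<le> g s"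
    and u_bound: "\<And>m. m \<le> k \<Longrightarrow> \<bar>u m\<bar> \<le> M"
  shows "\<bar>g 0 * u (k + 1) - (\<Sum>s=0..k. g s * (u (k - s + 1) - u (k - s)))\<bar> \<le> g 0 * M"
proof -
  have "\<bar>g 0 * u (k + 1) - (\<Sum>s=0..k. g s * (u (k - s + 1) - u (k - s)))\<bar>
      = \<bar>(\<Sum>s<k. (g s - g (s + 1)) * u (k - s)) + g k * u 0\<bar>"
    unfolding sum_weighted_differences_by_parts by simp
  also have "\<dots> \<le> (\<Sum>s<k. \<bar>(g s - g (s + 1)) * u (k - s)\<bar>) + \<bar>g k * u 0\<bar>"
    by (rule order_trans[OF abs_triangle_ineq]) (simp add: sum_abs)
  also have "\<dots> \<le> (\<Sum>s<k. (g s - g (s + 1)) * M) + g k * M"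
  proof (intro add_mono sum_mono)
    fix s assume "s \<in> {..<k}"
    then show "\<bar>(g s - g (s + 1)) * u (k - s)\<bar> \<le> (g s - g (s + 1)) * M"
      using g_decr[of s] u_bound[of "k - s"] by (simp add: abs_mult mult_left_mono)
  next
    show "\<bar>g k * u 0\<bar> \<le> g k * M"
      using g_nonneg[of k] u_bound[of 0] by (simp add: abs_mult mult_left_mono)
  qed
  also have "\<dots> = g 0 * M"
    by (induction k) (simp_all add: algebra_simps)
  finally show ?thesis .
qed

lemma L1_diff_history_bound:
  assumes "0 < \<alpha>" "\<alpha> < 1" and "\<And>m. m \<le> k \<Longrightarrow> \<bar>u m\<bar> \<le> M"
  shows "\<bar>u (k + 1) - L1_diff \<alpha> u k\<bar> \<le> M"
  using sum_weighted_differences_history_bound[of "omega \<alpha>" k u M]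
    omega_nonneg omega_Suc_le assms
  unfolding L1_diff_def by simp

subsection \<open>The discrete maximum principle at a single grid point\<close>

text \<open>
  \<open>p\<close> is the value at the point, \<open>R\<close> the history term and \<open>e\<^sub>\<pm>\<close>, \<open>f\<^sub>\<pm>\<close> the neighbour values in
  the \<open>x\<close>- and \<open>y\<close>-directions.
\<close>
lemma centred_scheme_point_bound:
  fixes \<sigma> a b c d dx dy p R e\<^sub>p e\<^sub>m f\<^sub>p f\<^sub>m M :: real
  assumes "0 < \<sigma>" "0 < dx" "0 < dy"
    and "0 \<le> a" "a * dx \<le> 2 * c" and "0 \<le> b" "b * dy \<le> 2 * d"
    and scheme: "\<sigma> * (p - R) + a * (e\<^sub>p - e\<^sub>m) / (2 * dx) + b * (f\<^sub>p - f\<^sub>m) / (2 * dy)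
             = c * (e\<^sub>p - 2 * p + e\<^sub>m) / dx\<^sup>2 + d * (f\<^sub>p - 2 * p + f\<^sub>m) / dy\<^sup>2"
    and "\<bar>R\<bar> \<le> M"
    and "\<bar>e\<^sub>p\<bar> \<le> \<bar>p\<bar>" "\<bar>e\<^sub>m\<bar> \<le> \<bar>p\<bar>" "\<bar>f\<^sub>p\<bar> \<le> \<bar>p\<bar>" "\<bar>f\<^sub>m\<bar> \<le> \<bar>p\<bar>"
  shows "\<bar>p\<bar> \<le> M"
proof -
  define \<mu>\<^sub>x\<^sub>p where "\<mu>\<^sub>x\<^sub>p = c / dx\<^sup>2 - a / (2 * dx)"
  define \<mu>\<^sub>x\<^sub>m where "\<mu>\<^sub>x\<^sub>m = c / dx\<^sup>2 + a / (2 * dx)"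
  define \<mu>\<^sub>y\<^sub>p where "\<mu>\<^sub>y\<^sub>p = d / dy\<^sup>2 - b / (2 * dy)"
  define \<mu>\<^sub>y\<^sub>m where "\<mu>\<^sub>y\<^sub>m = d / dy\<^sup>2 + b / (2 * dy)"
  have "\<mu>\<^sub>x\<^sub>p = (2 * c - a * dx) / (2 * dx\<^sup>2)" "\<mu>\<^sub>y\<^sub>p = (2 * d - b * dy) / (2 * dy\<^sup>2)"
    unfolding \<mu>\<^sub>x\<^sub>p_def \<mu>\<^sub>y\<^sub>p_def using assms(2,3) by (simp_all add: field_simps power2_eq_square)
  then have "0 \<le> \<mu>\<^sub>x\<^sub>p" "0 \<le> \<mu>\<^sub>y\<^sub>p" using assms(2-7) by simp_all
  moreover have "0 \<le> a / (2 * dx)" "0 \<le> b / (2 * dy)" using assms(2-7) by simp_all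
  ultimately have weights: "0 \<le> \<mu>\<^sub>x\<^sub>p" "0 \<le> \<mu>\<^sub>x\<^sub>m" "0 \<le> \<mu>\<^sub>y\<^sub>p" "0 \<le> \<mu>\<^sub>y\<^sub>m"
    unfolding \<mu>\<^sub>x\<^sub>p_def \<mu>\<^sub>x\<^sub>m_def \<mu>\<^sub>y\<^sub>p_def \<mu>\<^sub>y\<^sub>m_def by linarith+
  have "(\<sigma> + \<mu>\<^sub>x\<^sub>p + \<mu>\<^sub>x\<^sub>m + \<mu>\<^sub>y\<^sub>p + \<mu>\<^sub>y\<^sub>m) * p = \<sigma> * R + \<mu>\<^sub>x\<^sub>p * e\<^sub>p + \<mu>\<^sub>x\<^sub>m * e\<^sub>m + \<mu>\<^sub>y\<^sub>p * f\<^sub>p + \<mu>\<^sub>y\<^sub>m * f\<^sub>m"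
    using scheme unfolding \<mu>\<^sub>x\<^sub>p_def \<mu>\<^sub>x\<^sub>m_def \<mu>\<^sub>y\<^sub>p_def \<mu>\<^sub>y\<^sub>m_def
    by (simp add: algebra_simps add_divide_distrib diff_divide_distrib)
  then have "(\<sigma> + \<mu>\<^sub>x\<^sub>p + \<mu>\<^sub>x\<^sub>m + \<mu>\<^sub>y\<^sub>p + \<mu>\<^sub>y\<^sub>m) * \<bar>p\<bar>
      = \<bar>\<sigma> * R + \<mu>\<^sub>x\<^sub>p * e\<^sub>p + \<mu>\<^sub>x\<^sub>m * e\<^sub>m + \<mu>\<^sub>y\<^sub>p * f\<^sub>p + \<mu>\<^sub>y\<^sub>m * f\<^sub>m\<bar>"
    using assms(1) weights by (metis abs_mult abs_of_nonneg add_nonneg_nonneg less_imp_le)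
  also have "\<dots> \<le> \<sigma> * \<bar>R\<bar> + \<mu>\<^sub>x\<^sub>p * \<bar>e\<^sub>p\<bar> + \<mu>\<^sub>x\<^sub>m * \<bar>e\<^sub>m\<bar> + \<mu>\<^sub>y\<^sub>p * \<bar>f\<^sub>p\<bar> + \<mu>\<^sub>y\<^sub>m * \<bar>f\<^sub>m\<bar>"
    using assms(1) weights by (simp add: abs_mult order_trans[OF abs_triangle_ineq] add_mono)
  also have "\<dots> \<le> \<sigma> * M + \<mu>\<^sub>x\<^sub>p * \<bar>p\<bar> + \<mu>\<^sub>x\<^sub>m * \<bar>p\<bar> + \<mu>\<^sub>y\<^sub>p * \<bar>p\<bar> + \<mu>\<^sub>y\<^sub>m * \<bar>p\<bar>"
    using assms(1,8-) weights by (intro add_mono mult_left_mono) auto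
  finally have "\<sigma> * \<bar>p\<bar> \<le> \<sigma> * M" by (simp add: algebra_simps)
  then show ?thesis using assms(1) by simp
qed

subsection \<open>Stability of the homogeneous scheme\<close>

locale homogeneous_scheme =
  fixes \<alpha> \<sigma> dx dy :: real and Nx Ny Nt :: nat and a b c d e :: "nat \<Rightarrow> nat \<Rightarrow> nat \<Rightarrow> real"
  assumes \<alpha>: "0 < \<alpha>" "\<alpha> < 1" and \<sigma>_pos: "0 < \<sigma>" and dx_pos: "0 < dx" and dy_pos: "0 < dy"
    and mesh: "\<And>i j k. (i, j) \<in> grid_interior Nx Ny \<Longrightarrow> 1 \<le> k \<Longrightarrow> k \<le> Nt \<Longrightarrow>
      0 \<le> a i j k \<and> a i j k * dx \<le> 2 * c i j k \<and> 0 \<le> b i j k \<and> b i j k * dy \<le> 2 * d i j k"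
    and boundary: "\<And>i j k. i \<le> Nx \<Longrightarrow> j \<le> Ny \<Longrightarrow> 1 \<le> k \<Longrightarrow> k \<le> Nt \<Longrightarrow>
      (i, j) \<notin> grid_interior Nx Ny \<Longrightarrow> e i j k = 0"
    and scheme: "\<And>i j k. (i, j) \<in> grid_interior Nx Ny \<Longrightarrow> k < Nt \<Longrightarrow>
      \<sigma> * L1_diff \<alpha> (e i j) k
      + a i j (k + 1) * (e (i + 1) j (k + 1) - e (i - 1) j (k + 1)) / (2 * dx)
      + b i j (k + 1) * (e i (j + 1) (k + 1) - e i (j - 1) (k + 1)) / (2 * dy)
      = c i j (k + 1) * (e (i + 1) j (k + 1) - 2 * e i j (k + 1) + e (i - 1) j (k + 1)) / dx\<^sup>2
      + d i j (k + 1) * (e i (j + 1) (k + 1) - 2 * e i j (k + 1) + e i (j - 1) (k + 1)) / dy\<^sup>2"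
begin

lemma next_level_bound:
  assumes "k < Nt"
    and history: "\<And>i j m. (i, j) \<in> grid_interior Nx Ny \<Longrightarrow> m \<le> k \<Longrightarrow> \<bar>e i j m\<bar> \<le> M"
    and "(i, j) \<in> grid_interior Nx Ny"
  shows "\<bar>e i j (k + 1)\<bar> \<le> M"
proof -
  let ?I = "grid_interior Nx Ny" and ?E = "\<lambda>(i, j). \<bar>e i j (k + 1)\<bar>"
  have "finite ?I" unfolding grid_interior_def by simp
  have "Max (?E ` ?I) \<in> ?E ` ?I"
    using \<open>finite ?I\<close> assms(3) by (intro Max_in) auto
  then obtain i0 j0 where ij0: "(i0, j0) \<in> ?I" and p_max: "\<bar>e i0 j0 (k + 1)\<bar> = Max (?E ` ?I)"
    by auto
  define p where "p = e i0 j0 (k + 1)"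
  have dominated: "\<bar>e i' j' (k + 1)\<bar> \<le> \<bar>p\<bar>" if "i' \<le> Nx" "j' \<le> Ny" for i' j'
  proof (cases "(i', j') \<in> ?I")
    case True
    then show ?thesis unfolding p_def p_max using \<open>finite ?I\<close> by (intro Max_ge) auto
  next
    case False
    then show ?thesis using boundary that \<open>k < Nt\<close> by simp
  qed
  have i0: "1 \<le> i0" "i0 + 1 \<le> Nx" and j0: "1 \<le> j0" "j0 + 1 \<le> Ny"
    using ij0 unfolding grid_interior_def by auto
  define R where "R = p - L1_diff \<alpha> (e i0 j0) k"
  have "\<bar>R\<bar> \<le> M"
    unfolding R_def p_def using L1_diff_history_bound[OF \<alpha>] history[OF ij0] by blast
  have "\<sigma> * L1_diff \<alpha> (e i0 j0) k = \<sigma> * (p - R)" unfolding R_def by simp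
  note scheme_at_max = scheme[OF ij0 \<open>k < Nt\<close>, unfolded this p_def[symmetric]]
  have "\<bar>p\<bar> \<le> M"
    by (rule centred_scheme_point_bound[OF \<sigma>_pos dx_pos dy_pos _ _ _ _ scheme_at_max \<open>\<bar>R\<bar> \<le> M\<close>])
      (use mesh[OF ij0, of "k + 1"] \<open>k < Nt\<close> dominated i0 j0 in auto)
  moreover have "i \<le> Nx" "j \<le> Ny" using assms(3) unfolding grid_interior_def by auto
  ultimately show ?thesis using dominated[of i j] by linarith
qed

lemma bounded_by_initial_level:
  assumes initial: "\<And>i j. (i, j) \<in> grid_interior Nx Ny \<Longrightarrow> \<bar>e i j 0\<bar> \<le> M"
  shows "m \<le> Nt \<Longrightarrow> (i, j) \<in> grid_interior Nx Ny \<Longrightarrow> \<bar>e i j m\<bar> \<le> M"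
proof (induction m arbitrary: i j rule: less_induct)
  case (less m)
  show ?case
  proof (cases m)
    case 0
    then show ?thesis using initial less.prems by simp
  next
    case (Suc k)
    then show ?thesis
      using next_level_bound[of k M i j] less by simp
  qed
qed

end

subsection \<open>From the scheme (IFDS) to the error equation\<close>

lemma sigma_coef_pos: "0 < dt \<Longrightarrow> \<alpha> < 1 \<Longrightarrow> 0 < sigma_coef \<alpha> dt"
  unfolding sigma_coef_def by (simp add: Gamma_real_pos)

lemma not_in_grid_interior:
  "i \<le> Nx \<Longrightarrow> j \<le> Ny \<Longrightarrow> (i, j) \<notin> grid_interior Nx Ny \<longleftrightarrow> i = 0 \<or> i = Nx \<or> j = 0 \<or> j = Ny"
  unfolding grid_interior_def by auto

lemma IFDS_boundary:
  assumes "IFDS \<alpha> T xL xR yL yR Nx Ny Nt a b c d f \<psi> v"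
    and "i \<le> Nx" "j \<le> Ny" "1 \<le> k" "k \<le> Nt" "(i, j) \<notin> grid_interior Nx Ny"
  shows "v i j k = 0"
  using assms unfolding IFDS_def Let_def not_in_grid_interior[OF assms(2,3)] by blast

lemma IFDS_scheme:
  assumes "IFDS \<alpha> T xL xR yL yR Nx Ny Nt a b c d f \<psi> v"
    and "(i, j) \<in> grid_interior Nx Ny" "k < Nt"
  defines "G \<equiv> at_grid xL xR yL yR T Nx Ny Nt"
    and "dx \<equiv> (xR - xL) / real Nx" and "dy \<equiv> (yR - yL) / real Ny"
  shows "sigma_coef \<alpha> (T / real Nt) * L1_diff \<alpha> (v i j) k
      + G a i j (k + 1) * (v (i + 1) j (k + 1) - v (i - 1) j (k + 1)) / (2 * dx)
      + G b i j (k + 1) * (v i (j + 1) (k + 1) - v i (j - 1) (k + 1)) / (2 * dy)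
      = G c i j (k + 1) * (v (i + 1) j (k + 1) - 2 * v i j (k + 1) + v (i - 1) j (k + 1)) / dx\<^sup>2
      + G d i j (k + 1) * (v i (j + 1) (k + 1) - 2 * v i j (k + 1) + v i (j - 1) (k + 1)) / dy\<^sup>2
      + G f i j (k + 1)"
proof -
  have "1 \<le> i \<and> i \<le> Nx - 1 \<and> 1 \<le> j \<and> j \<le> Ny - 1 \<and> k \<le> Nt - 1"
    using assms(2,3) unfolding grid_interior_def by auto
  then show ?thesis
    using assms(1) unfolding IFDS_def Let_def G_def at_grid_def dx_def dy_def L1_diff_def by blast
qed

lemma IFDS_difference_scheme:
  assumes "IFDS \<alpha> T xL xR yL yR Nx Ny Nt a b c d f \<psi> v"
    and "IFDS \<alpha> T xL xR yL yR Nx Ny Nt a b c d f \<psi>' v'"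
    and "(i, j) \<in> grid_interior Nx Ny" "k < Nt"
  defines "G \<equiv> at_grid xL xR yL yR T Nx Ny Nt" and "e \<equiv> \<lambda>i j k. v i j k - v' i j k"
    and "dx \<equiv> (xR - xL) / real Nx" and "dy \<equiv> (yR - yL) / real Ny"
  shows "sigma_coef \<alpha> (T / real Nt) * L1_diff \<alpha> (e i j) k
      + G a i j (k + 1) * (e (i + 1) j (k + 1) - e (i - 1) j (k + 1)) / (2 * dx)
      + G b i j (k + 1) * (e i (j + 1) (k + 1) - e i (j - 1) (k + 1)) / (2 * dy)
      = G c i j (k + 1) * (e (i + 1) j (k + 1) - 2 * e i j (k + 1) + e (i - 1) j (k + 1)) / dx\<^sup>2
      + G d i j (k + 1) * (e i (j + 1) (k + 1) - 2 * e i j (k + 1) + e i (j - 1) (k + 1)) / dy\<^sup>2"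
proof -
  define lhs where "lhs = (\<lambda>u :: nat \<Rightarrow> nat \<Rightarrow> nat \<Rightarrow> real. sigma_coef \<alpha> (T / real Nt) * L1_diff \<alpha> (u i j) k
      + G a i j (k + 1) * (u (i + 1) j (k + 1) - u (i - 1) j (k + 1)) / (2 * dx)
      + G b i j (k + 1) * (u i (j + 1) (k + 1) - u i (j - 1) (k + 1)) / (2 * dy))"
  define rhs where "rhs = (\<lambda>u :: nat \<Rightarrow> nat \<Rightarrow> nat \<Rightarrow> real.
      G c i j (k + 1) * (u (i + 1) j (k + 1) - 2 * u i j (k + 1) + u (i - 1) j (k + 1)) / dx\<^sup>2
      + G d i j (k + 1) * (u i (j + 1) (k + 1) - 2 * u i j (k + 1) + u i (j - 1) (k + 1)) / dy\<^sup>2)"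
  have "lhs e = lhs v - lhs v'" "rhs e = rhs v - rhs v'"
    unfolding lhs_def rhs_def by (simp_all add: e_def L1_diff_diff algebra_simps add_divide_distrib diff_divide_distrib)
  moreover have "lhs v = rhs v + G f i j (k + 1)" "lhs v' = rhs v' + G f i j (k + 1)"
    using IFDS_scheme[OF assms(1,3,4)] IFDS_scheme[OF assms(2,3,4)]
    unfolding lhs_def rhs_def G_def dx_def dy_def by simp_all
  ultimately have "lhs e = rhs e" by simp
  then show ?thesis unfolding lhs_def rhs_def .
qed

lemma at_grid_mesh_condition:
  fixes a b c d :: "real \<Rightarrow> real \<Rightarrow> real \<Rightarrow> real"
  assumes "0 < Nx" "0 < Ny" "0 < Nt" "0 < T" "xL < xR" "yL < yR" "0 < A"
    and B: "\<And>x y t. xL \<le> x \<Longrightarrow> x \<le> xR \<Longrightarrow> yL \<le> y \<Longrightarrow> y \<le> yR \<Longrightarrow> 0 \<le> t \<Longrightarrow> t \<le> T \<Longrightarrow>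
            0 \<le> a x y t \<and> a x y t \<le> A \<and> 0 \<le> b x y t \<and> b x y t \<le> A \<and> D \<le> c x y t \<and> D \<le> d x y t"
    and mesh: "max ((xR - xL) / real Nx) ((yR - yL) / real Ny) \<le> 2 * D / A"
    and "i \<le> Nx" "j \<le> Ny" "k \<le> Nt"
  defines "G \<equiv> at_grid xL xR yL yR T Nx Ny Nt"
    and "dx \<equiv> (xR - xL) / real Nx" and "dy \<equiv> (yR - yL) / real Ny"
  shows "0 \<le> G a i j k \<and> G a i j k * dx \<le> 2 * G c i j k \<and> 0 \<le> G b i j k \<and> G b i j k * dy \<le> 2 * G d i j k"
proof -
  have grid_point: "lo \<le> lo + real n * ((hi - lo) / real N) \<and> lo + real n * ((hi - lo) / real N) \<le> hi"
    if "n \<le> N" "0 < N" "lo \<le> hi" for lo hi :: real and n N :: nat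
  proof -
    have "real n * ((hi - lo) / real N) \<le> real N * ((hi - lo) / real N)"
      using that by (intro mult_right_mono) auto
    then show ?thesis using that by simp
  qed
  have "0 \<le> real k * (T / real Nt) \<and> real k * (T / real Nt) \<le> T"
    using grid_point[of k Nt 0 T] assms(3,4,12) by simp
  then have coeffs: "0 \<le> G a i j k \<and> G a i j k \<le> A \<and> 0 \<le> G b i j k \<and> G b i j k \<le> A \<and>
      D \<le> G c i j k \<and> D \<le> G d i j k"
    unfolding G_def at_grid_def using B grid_point assms(1,2,5,6,10,11) by simp
  have "A * dx \<le> 2 * D" "A * dy \<le> 2 * D"
    using mesh \<open>0 < A\<close> unfolding dx_def dy_def by (simp_all add: field_simps)
  moreover have "0 < dx" "0 < dy" unfolding dx_def dy_def using assms(1,2,5,6) by simp_all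
  moreover have "G a i j k * dx \<le> A * dx" "G b i j k * dy \<le> A * dy"
    using coeffs \<open>0 < dx\<close> \<open>0 < dy\<close> by (simp_all add: mult_right_mono)
  ultimately show ?thesis using coeffs by linarith
qed

lemma err_norm_eq_Max_image:
  "err_norm Nx Ny e k = Max ((\<lambda>(i, j). \<bar>e i j k\<bar>) ` grid_interior Nx Ny)"
proof -
  have "{\<bar>e i j k\<bar> | i j. 1 \<le> i \<and> i \<le> Nx - 1 \<and> 1 \<le> j \<and> j \<le> Ny - 1}
      = (\<lambda>(i, j). \<bar>e i j k\<bar>) ` grid_interior Nx Ny"
    unfolding grid_interior_def by (auto simp: image_iff) blast
  then show ?thesis unfolding err_norm_def by simp
qed

lemma err_norm_ge: "(i, j) \<in> grid_interior Nx Ny \<Longrightarrow> \<bar>e i j k\<bar> \<le> err_norm Nx Ny e k"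
  unfolding err_norm_eq_Max_image by (rule Max_ge) (auto simp: grid_interior_def)

lemma err_norm_le:
  "grid_interior Nx Ny \<noteq> {} \<Longrightarrow> (\<And>i j. (i, j) \<in> grid_interior Nx Ny \<Longrightarrow> \<bar>e i j k\<bar> \<le> M) \<Longrightarrow>
   err_norm Nx Ny e k \<le> M"
  unfolding err_norm_eq_Max_image by (subst Max_le_iff) (auto simp: grid_interior_def)

theorem mainTheorem2:
  fixes \<alpha> T xL xR yL yR A D :: real
    and Nx Ny Nt :: nat
    and a b c d f :: "real \<Rightarrow> real \<Rightarrow> real \<Rightarrow> real"
    and \<psi> \<psi>' :: "real \<Rightarrow> real \<Rightarrow> real"
    and v v' :: "nat \<Rightarrow> nat \<Rightarrow> nat \<Rightarrow> real"
  assumes "0 < \<alpha>" "\<alpha> < 1" "0 < T" "xL < xR" "yL < yR"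
    and "0 < Nx" "0 < Ny" "0 < Nt"
    and "0 < A" "0 < D"
    and B: "\<And>x y t. xL \<le> x \<Longrightarrow> x \<le> xR \<Longrightarrow> yL \<le> y \<Longrightarrow> y \<le> yR \<Longrightarrow> 0 \<le> t \<Longrightarrow> t \<le> T \<Longrightarrow>
            0 \<le> a x y t \<and> a x y t \<le> A \<and> 0 \<le> b x y t \<and> b x y t \<le> A \<and> D \<le> c x y t \<and> D \<le> d x y t"
    and "max ((xR - xL) / real Nx) ((yR - yL) / real Ny) \<le> 2 * D / A"
    and "IFDS \<alpha> T xL xR yL yR Nx Ny Nt a b c d f \<psi> v"
    and "IFDS \<alpha> T xL xR yL yR Nx Ny Nt a b c d f \<psi>' v'"
  shows "\<forall>k. 1 \<le> k \<and> k \<le> Nt \<longrightarrow>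
           err_norm Nx Ny (\<lambda>i j k. v i j k - v' i j k) k \<le> err_norm Nx Ny (\<lambda>i j k. v i j k - v' i j k) 0"
proof -
  define e where "e = (\<lambda>i j k. v i j k - v' i j k)"
  let ?G = "at_grid xL xR yL yR T Nx Ny Nt"
  interpret homogeneous_scheme \<alpha> "sigma_coef \<alpha> (T / real Nt)" "(xR - xL) / real Nx" "(yR - yL) / real Ny"
    Nx Ny Nt "?G a" "?G b" "?G c" "?G d" e
  proof
    show "0 < sigma_coef \<alpha> (T / real Nt)" using assms by (simp add: sigma_coef_pos)
  qed (use assms at_grid_mesh_condition[OF assms(6-8,3-5,9,11,12)]
         IFDS_boundary[OF assms(13)] IFDS_boundary[OF assms(14)]
         IFDS_difference_scheme[OF assms(13,14)] in
       \<open>auto simp: e_def grid_interior_def\<close>)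
  show ?thesis
  proof (cases "grid_interior Nx Ny = {}")
    case True
    \<comment> \<open>both norms are the same unspecified value \<open>Max {}\<close>\<close>
    then show ?thesis by (simp add: err_norm_eq_Max_image)
  next
    case False
    then show ?thesis
      using bounded_by_initial_level[of "err_norm Nx Ny e 0", OF err_norm_ge]
      by (auto simp: e_def[symmetric] intro!: err_norm_le)
  qed
qed

end
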